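(* Let $r\geq 2$ be an integer and $m=rn$. Let $G=(A,B,E)$ be sampled from the Erdős–Rényi random bipartite graph distribution $\mathcal{G}(n,m,p)$ with $p\geq\frac{64\log m}{n}$. Then, with high probability, for every subgraph $H=(A,B,E')$ of $G$ (with $E'\subseteq E$) of maximum degree at most $16\log m$, the graph $G-H=(A,B,E\setminus E')$ contains a perfect $r$-matching.
   Context: $\mathcal{G}(a,b,p)$ denotes the random bipartite graph with left vertex set $A$ of size $a$, right vertex set $B$ of size $b$, where each pair $(x,y)\in A\times B$ is an edge independently with probability $p$. An $r$-matching of a bipartite graph is a subgraph in which every left vertex has degree at most $r$ and every right vertex has degree at most 1; it is perfect if every left vertex has degree exactly $r$ and every right vertex has degree exactly 1. $\log$ is natural. "With high probability" means with probability tending to 1 as $n\to\infty$. *)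

theory Defs
  imports "HOL-Probability.Probability"
begin

definition bip_graph_pmf :: "nat \<Rightarrow> nat \<Rightarrow> real \<Rightarrow> (nat \<times> nat) set pmf" where
  "bip_graph_pmf a b p =
     map_pmf (\<lambda>f. {e \<in> {0..<a} \<times> {0..<b}. f e})
       (Pi_pmf ({0..<a} \<times> {0..<b}) False (\<lambda>_. bernoulli_pmf p))"

definition perfect_r_matching ::
  "nat \<Rightarrow> nat set \<Rightarrow> nat set \<Rightarrow> (nat \<times> nat) set \<Rightarrow> (nat \<times> nat) set \<Rightarrow> bool" where
  "perfect_r_matching r A B E M \<longleftrightarrow>
     M \<subseteq> E \<and> M \<subseteq> A \<times> B \<and>
     (\<forall>x\<in>A. card {y. (x, y) \<in> M} = r) \<and>
     (\<forall>y\<in>B. card {x. (x, y) \<in> M} = 1)"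

definition has_perfect_r_matching ::
  "nat \<Rightarrow> nat set \<Rightarrow> nat set \<Rightarrow> (nat \<times> nat) set \<Rightarrow> bool" where
  "has_perfect_r_matching r A B E \<longleftrightarrow> (\<exists>M. perfect_r_matching r A B E M)"

definition max_degree_le :: "nat set \<Rightarrow> nat set \<Rightarrow> (nat \<times> nat) set \<Rightarrow> real \<Rightarrow> bool" where
  "max_degree_le A B H d \<longleftrightarrow>
     (\<forall>x\<in>A. real (card {y. (x, y) \<in> H}) \<le> d) \<and>
     (\<forall>y\<in>B. real (card {x. (x, y) \<in> H}) \<le> d)"

end

theory Submission
  imports Defs
begin

(*
  By Hall's theorem, applied to r copies of every left vertex, if G - H has no perfect
  r-matching then some nonempty set S of left vertices has fewer than r|S| neighbours in
  G - H.  With T the set of the other right vertices, |T| + r|S| > m and all G-edges between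
  S and T lie in H, so there are at most 16 log m min(|S|, |T|) of them.  If |S| <= n/2 then
  |T| >= m/2 and S x T carries p|S||T| >= 32 r|S| log m expected edges; otherwise A - S has
  fewer than |T| vertices and the expectation is at least 32 |T| log m.  Markov's inequality
  for 2^(-e), e the number of edges in S x T, makes such sparse blocks rare enough to survive
  a union bound over all candidate blocks, so the failure probability is at most 2/m.
*)

definition Hall_condition :: "'i set \<Rightarrow> ('i \<Rightarrow> 'b set) \<Rightarrow> bool" where
  "Hall_condition I N \<longleftrightarrow> (\<forall>J\<subseteq>I. card J \<le> card (\<Union>(N ` J)))"

lemma Hall_condition_subset:
  "Hall_condition I N \<Longrightarrow> J \<subseteq> I \<Longrightarrow> Hall_condition J N"
  unfolding Hall_condition_def by auto

lemma Hall_condition_remove_tight: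
  assumes "finite I" and "\<forall>i\<in>I. finite (N i)" and "Hall_condition I N"
    and "J \<subseteq> I" and tight: "card J = card (\<Union>(N ` J))"
  shows "Hall_condition (I - J) (\<lambda>i. N i - \<Union>(N ` J))"
  unfolding Hall_condition_def
proof (intro allI impI)
  fix K assume K: "K \<subseteq> I - J"
  define U where "U = \<Union>(N ` J)"
  have "finite K" "finite J"
    using K assms(4) by (auto intro: finite_subset[OF _ assms(1)])
  then have fin: "finite U" "finite (\<Union>i\<in>K. N i - U)"
    using K assms(2,4) unfolding U_def by auto
  have "card K + card J = card (K \<union> J)"
    using K \<open>finite K\<close> \<open>finite J\<close> by (subst card_Un_disjoint) auto
  also have "\<dots> \<le> card (\<Union>(N ` (K \<union> J)))"
    using assms K unfolding Hall_condition_def by (metis Diff_subset Un_subset_iff order_trans)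
  also have "\<Union>(N ` (K \<union> J)) = (\<Union>i\<in>K. N i - U) \<union> U"
    unfolding U_def by auto
  also have "card \<dots> = card (\<Union>i\<in>K. N i - U) + card U"
    using fin by (subst card_Un_disjoint) auto
  finally show "card K \<le> card (\<Union>i\<in>K. N i - \<Union>(N ` J))"
    using tight U_def by simp
qed

lemma Hall_condition_remove_point:
  assumes "finite I" and "\<forall>i\<in>I. finite (N i)" and "i0 \<in> I"
    and slack: "\<And>J. J \<subseteq> I \<Longrightarrow> J \<noteq> {} \<Longrightarrow> J \<noteq> I \<Longrightarrow> card J < card (\<Union>(N ` J))"
  shows "Hall_condition (I - {i0}) (\<lambda>i. N i - {y})"
  unfolding Hall_condition_def
proof (intro allI impI)
  fix K assume K: "K \<subseteq> I - {i0}"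
  show "card K \<le> card (\<Union>i\<in>K. N i - {y})"
  proof (cases "K = {}")
    case False
    have "finite K"
      using K assms(1) finite_subset by blast
    then have "finite (\<Union>(N ` K))"
      using K assms(2) by auto
    moreover have "card K < card (\<Union>(N ` K))"
      using slack[of K] K False assms(3) by auto
    moreover have "(\<Union>i\<in>K. N i - {y}) = \<Union>(N ` K) - {y}"
      by auto
    ultimately show ?thesis
      by (auto simp: card_Diff_singleton_if)
  qed simp
qed

definition is_SDR :: "'i set \<Rightarrow> ('i \<Rightarrow> 'b set) \<Rightarrow> ('i \<Rightarrow> 'b) \<Rightarrow> bool" where
  "is_SDR I N f \<longleftrightarrow> inj_on f I \<and> (\<forall>i\<in>I. f i \<in> N i)"

lemma is_SDR_join_tight:
  assumes "is_SDR J N g" and "is_SDR (I - J) (\<lambda>i. N i - \<Union>(N ` J)) h" and "J \<subseteq> I"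
  shows "is_SDR I N (\<lambda>i. if i \<in> J then g i else h i)"
proof -
  have "g ` J \<inter> h ` (I - J) = {}"
    using assms(1,2) unfolding is_SDR_def by fastforce
  then have "inj_on (\<lambda>i. if i \<in> J then g i else h i) (J \<union> (I - J))"
    using assms(1,2) unfolding is_SDR_def by (intro inj_on_disjoint_Un) auto
  moreover have "J \<union> (I - J) = I"
    using assms(3) by blast
  ultimately show ?thesis
    using assms(1,2) unfolding is_SDR_def by auto
qed

lemma is_SDR_fun_upd:
  assumes "is_SDR (I - {i}) (\<lambda>j. N j - {y}) h" and "i \<in> I" and "y \<in> N i"
  shows "is_SDR I N (h(i := y))"
proof -
  have y_new: "y \<notin> h ` (I - {i})"
    using assms(1) unfolding is_SDR_def by auto
  have "inj_on (h(i := y)) (insert i (I - {i}))"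
    unfolding inj_on_insert using assms(1) inj_on_fun_updI[of h _ y] y_new
    by (simp add: is_SDR_def)
  moreover have "insert i (I - {i}) = I"
    using assms(2) by blast
  ultimately show ?thesis
    using assms unfolding is_SDR_def by auto
qed

theorem Hall_marriage:
  assumes "finite I" and "\<forall>i\<in>I. finite (N i)" and "Hall_condition I N"
  shows "\<exists>f. is_SDR I N f"
  using assms
proof (induction "card I" arbitrary: I N rule: less_induct)
  case less
  show ?case
  proof (cases "\<exists>J. J \<subseteq> I \<and> J \<noteq> {} \<and> J \<noteq> I \<and> card J = card (\<Union>(N ` J))")
    case True
    then obtain J where J: "J \<subseteq> I" "J \<noteq> {}" "J \<noteq> I" and tight: "card J = card (\<Union>(N ` J))"
      by blast
    have "card J < card I" "card (I - J) < card I"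
      using J by (auto intro!: psubset_card_mono[OF less.prems(1)])
    have "finite J"
      using J(1) less.prems(1) by (rule finite_subset)
    have "\<exists>g. is_SDR J N g"
      using \<open>finite J\<close> J(1) less.prems(2) Hall_condition_subset[OF less.prems(3) J(1)]
      by (intro less.hyps[OF \<open>card J < card I\<close>]) auto
    moreover have "\<exists>h. is_SDR (I - J) (\<lambda>i. N i - \<Union>(N ` J)) h"
      using less.prems(1,2) Hall_condition_remove_tight[OF less.prems J(1) tight]
      by (intro less.hyps[OF \<open>card (I - J) < card I\<close>]) auto
    ultimately show ?thesis
      using is_SDR_join_tight[OF _ _ J(1)] by blast
  next
    case no_tight: False
    show ?thesis
    proof (cases "I = {}")
      case True
      then show ?thesis
        unfolding is_SDR_def by simp
    next
      case False
      then obtain i where i: "i \<in> I"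
        by blast
      then have "card {i} \<le> card (\<Union>(N ` {i}))"
        using less.prems(3) unfolding Hall_condition_def by (metis empty_subsetI insert_subset)
      then have "N i \<noteq> {}"
        by auto
      then obtain y where y: "y \<in> N i"
        by blast
      have slack: "\<And>J. J \<subseteq> I \<Longrightarrow> J \<noteq> {} \<Longrightarrow> J \<noteq> I \<Longrightarrow> card J < card (\<Union>(N ` J))"
        using no_tight less.prems(3) unfolding Hall_condition_def by (metis le_neq_implies_less)
      have "Hall_condition (I - {i}) (\<lambda>j. N j - {y})"
        by (rule Hall_condition_remove_point[OF less.prems(1,2) i slack])
      moreover have "card (I - {i}) < card I"
        using less.prems(1) i by (rule card_Diff1_less)
      ultimately have "\<exists>h. is_SDR (I - {i}) (\<lambda>j. N j - {y}) h"
        using less.prems(1,2) by (intro less.hyps) auto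
      then obtain h where "is_SDR (I - {i}) (\<lambda>j. N j - {y}) h"
        by blast
      then have "is_SDR I N (h(i := y))"
        using i y by (rule is_SDR_fun_upd)
      then show ?thesis
        by blast
    qed
  qed
qed

lemma perfect_r_matching_of_bij_betw:
  assumes bij: "bij_betw f (A \<times> {..<r}) B"
    and edges: "\<And>x k. x \<in> A \<Longrightarrow> k < r \<Longrightarrow> (x, f (x, k)) \<in> F"
  shows "perfect_r_matching r A B F ((\<lambda>(x, k). (x, f (x, k))) ` (A \<times> {..<r}))"
    (is "perfect_r_matching r A B F ?M")
  unfolding perfect_r_matching_def
proof (intro conjI ballI)
  show "?M \<subseteq> F" "?M \<subseteq> A \<times> B"
    using edges bij_betw_apply[OF bij] by auto
next
  fix x assume "x \<in> A"
  then have "{y. (x, y) \<in> ?M} = f ` ({x} \<times> {..<r})" and "{x} \<times> {..<r} \<subseteq> A \<times> {..<r}"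
    by force+
  moreover from this(2) have "inj_on f ({x} \<times> {..<r})"
    using bij by (auto simp: bij_betw_def intro: inj_on_subset)
  ultimately show "card {y. (x, y) \<in> ?M} = r"
    by (simp add: card_image card_cartesian_product)
next
  fix y assume "y \<in> B"
  then obtain i where i: "i \<in> A \<times> {..<r}" "f i = y"
    using bij by (auto simp: bij_betw_def)
  have "{x. (x, y) \<in> ?M} = {fst i}"
    using i bij by (force simp: bij_betw_def dest: inj_onD)
  then show "card {x. (x, y) \<in> ?M} = 1"
    by simp
qed

theorem has_perfect_r_matching_if_Hall:
  assumes "finite A" and "finite B" and card_B: "card B = r * card A" and "F \<subseteq> A \<times> B"
    and Hall: "\<And>S. S \<subseteq> A \<Longrightarrow> r * card S \<le> card (F `` S)"
  shows "has_perfect_r_matching r A B F"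
proof -
  define N where "N i = F `` {fst i}" for i :: "nat \<times> nat"
  have "Hall_condition (A \<times> {..<r}) N"
    unfolding Hall_condition_def
  proof (intro allI impI)
    fix J assume J: "J \<subseteq> A \<times> {..<r}"
    then have "fst ` J \<subseteq> A"
      by force
    then have "finite (fst ` J)"
      using \<open>finite A\<close> by (rule finite_subset)
    then have "card J \<le> card (fst ` J \<times> {..<r})"
      using J by (intro card_mono) force+
    also have "\<dots> = r * card (fst ` J)"
      by (simp add: card_cartesian_product)
    also have "\<dots> \<le> card (F `` fst ` J)"
      using Hall \<open>fst ` J \<subseteq> A\<close> .
    also have "F `` fst ` J = \<Union>(N ` J)"
      unfolding N_def by force
    finally show "card J \<le> card (\<Union>(N ` J))" .
  qed
  moreover have "\<forall>i\<in>A \<times> {..<r}. finite (N i)"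
    using \<open>finite B\<close> \<open>F \<subseteq> A \<times> B\<close> unfolding N_def by (auto intro: finite_subset)
  moreover have "finite (A \<times> {..<r})"
    using \<open>finite A\<close> by simp
  ultimately obtain f where f: "inj_on f (A \<times> {..<r})" "\<forall>i\<in>A \<times> {..<r}. f i \<in> N i"
    using Hall_marriage unfolding is_SDR_def by metis
  have "f ` (A \<times> {..<r}) \<subseteq> B"
    using f(2) \<open>F \<subseteq> A \<times> B\<close> unfolding N_def by auto
  moreover have "card (f ` (A \<times> {..<r})) = card B"
    using f(1) card_B by (simp add: card_image card_cartesian_product)
  ultimately have "bij_betw f (A \<times> {..<r}) B"
    using f(1) \<open>finite B\<close> by (simp add: bij_betw_def card_subset_eq)
  then have "perfect_r_matching r A B F ((\<lambda>(x, k). (x, f (x, k))) ` (A \<times> {..<r}))"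
    by (rule perfect_r_matching_of_bij_betw) (use f(2) in \<open>auto simp: N_def\<close>)
  then show ?thesis
    unfolding has_perfect_r_matching_def by blast
qed

lemma card_Int_Times_le_row_degree:
  assumes "finite S" and "finite H" and deg: "\<And>x. x \<in> S \<Longrightarrow> real (card {y. (x, y) \<in> H}) \<le> d"
  shows "real (card (H \<inter> S \<times> T)) \<le> d * card S"
proof -
  have "H \<inter> S \<times> T \<subseteq> (SIGMA x:S. H `` {x})"
    by auto
  then have "card (H \<inter> S \<times> T) \<le> (\<Sum>x\<in>S. card (H `` {x}))"
    using assms(1,2) by (metis card_SigmaI card_mono finite_Image finite_SigmaI)
  then have "real (card (H \<inter> S \<times> T)) \<le> (\<Sum>x\<in>S. real (card {y. (x, y) \<in> H}))"
    by (simp add: Image_singleton flip: of_nat_sum)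
  also have "\<dots> \<le> d * card S"
    using sum_mono[of S _ "\<lambda>_. d"] deg by (simp add: mult.commute)
  finally show ?thesis .
qed

lemma card_Int_Times_le_column_degree:
  assumes "finite T" and "finite H" and "\<And>y. y \<in> T \<Longrightarrow> real (card {x. (x, y) \<in> H}) \<le> d"
  shows "real (card (H \<inter> S \<times> T)) \<le> d * card T"
proof -
  have "H \<inter> S \<times> T = (H\<inverse> \<inter> T \<times> S)\<inverse>"
    by auto
  then show ?thesis
    using card_Int_Times_le_row_degree[of T "H\<inverse>" d S] assms by simp
qed

lemma sparse_block_if_no_perfect_r_matching:
  assumes "finite A" and "finite B" and card_B: "card B = r * card A"
    and "E \<subseteq> A \<times> B" and "H \<subseteq> E" and deg: "max_degree_le A B H d"
    and no_matching: "\<not> has_perfect_r_matching r A B (E - H)"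
  obtains S T where "S \<subseteq> A" "T \<subseteq> B" "S \<noteq> {}" "card B < card T + r * card S"
    "real (card (E \<inter> S \<times> T)) \<le> d * card S" "real (card (E \<inter> S \<times> T)) \<le> d * card T"
proof -
  have "\<exists>S\<subseteq>A. card ((E - H) `` S) < r * card S"
  proof (rule ccontr)
    assume "\<not> ?thesis"
    then have "has_perfect_r_matching r A B (E - H)"
      using \<open>E \<subseteq> A \<times> B\<close> by (intro has_perfect_r_matching_if_Hall[OF assms(1-3)]) (auto simp: not_less)
    with no_matching show False ..
  qed
  then obtain S where S: "S \<subseteq> A" and violator: "card ((E - H) `` S) < r * card S"
    by blast
  define T where "T = B - (E - H) `` S"
  have "(E - H) `` S \<subseteq> B"
    using \<open>E \<subseteq> A \<times> B\<close> by auto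
  moreover from this have "finite ((E - H) `` S)"
    using \<open>finite B\<close> by (rule finite_subset)
  ultimately have "card T = card B - card ((E - H) `` S)" "card ((E - H) `` S) \<le> card B"
    unfolding T_def using \<open>finite B\<close> by (auto simp: card_Diff_subset card_mono)
  then have "card B < card T + r * card S"
    using violator by linarith
  have "finite S" "finite T"
    using S assms(1,2) unfolding T_def by (auto intro: finite_subset)
  have "finite H"
    using \<open>H \<subseteq> E\<close> \<open>E \<subseteq> A \<times> B\<close> assms(1,2) by (meson finite_SigmaI finite_subset)
  have "card (E \<inter> S \<times> T) \<le> card (H \<inter> S \<times> T)"
    unfolding T_def using \<open>finite H\<close> by (intro card_mono) auto
  moreover have "real (card (H \<inter> S \<times> T)) \<le> d * card S"
    using \<open>finite S\<close> \<open>finite H\<close> S deg unfolding max_degree_le_def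
    by (intro card_Int_Times_le_row_degree) auto
  moreover have "real (card (H \<inter> S \<times> T)) \<le> d * card T"
    using \<open>finite T\<close> \<open>finite H\<close> deg unfolding max_degree_le_def T_def
    by (intro card_Int_Times_le_column_degree) auto
  moreover have "S \<noteq> {}"
    using violator by auto
  moreover have "T \<subseteq> B"
    unfolding T_def by blast
  ultimately show ?thesis
    using that S \<open>card B < card T + r * card S\<close> by (meson of_nat_le_iff order_trans)
qed

lemma set_pmf_bip_graph_pmf:
  "E \<in> set_pmf (bip_graph_pmf a b p) \<Longrightarrow> E \<subseteq> {0..<a} \<times> {0..<b}"
  unfolding bip_graph_pmf_def by auto

lemma expectation_half_power_card_Int:
  assumes D: "D \<subseteq> {0..<a} \<times> {0..<b}" and "0 \<le> p" "p \<le> 1"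
  shows "measure_pmf.expectation (bip_graph_pmf a b p) (\<lambda>E. (1/2) ^ card (E \<inter> D))
         = (1 - p / 2) ^ card D"
proof -
  define G where "G = {0..<a} \<times> {0..<b}"
  define w where "w e v = (if e \<in> D \<and> v then 1/2 else (1::real))" for e and v :: bool
  have "finite G"
    unfolding G_def by simp
  have factor: "(1/2) ^ card ({e \<in> G. f e} \<inter> D) = (\<Prod>e\<in>G. w e (f e))" for f
  proof -
    have "G \<inter> {e. e \<in> D \<and> f e} = {e \<in> G. f e} \<inter> D"
      by auto
    then show ?thesis
      unfolding w_def using \<open>finite G\<close> by (simp add: prod.If_cases)
  qed
  have "measure_pmf.expectation (bip_graph_pmf a b p) (\<lambda>E. (1/2) ^ card (E \<inter> D))
      = measure_pmf.expectation (Pi_pmf G False (\<lambda>_. bernoulli_pmf p)) (\<lambda>f. \<Prod>e\<in>G. w e (f e))"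
    unfolding bip_graph_pmf_def G_def[symmetric] by (simp add: factor)
  also have "\<dots> = (\<Prod>e\<in>G. measure_pmf.expectation (bernoulli_pmf p) (w e))"
    by (rule expectation_prod_Pi_pmf[OF \<open>finite G\<close>])
      (auto simp: w_def intro: integrable_measure_pmf_finite)
  also have "\<dots> = (\<Prod>e\<in>G. if e \<in> D then 1 - p / 2 else 1)"
    using assms(2,3) by (intro prod.cong) (auto simp: w_def)
  also have "\<dots> = (1 - p / 2) ^ card D"
    using D \<open>finite G\<close> unfolding G_def by (simp add: prod.If_cases Int_absorb1)
  finally show ?thesis .
qed

lemma prob_few_edges_le:
  assumes D: "D \<subseteq> {0..<a} \<times> {0..<b}" and p: "0 \<le> p" "p \<le> 1"
  shows "measure_pmf.prob (bip_graph_pmf a b p) {E. real (card (E \<inter> D)) \<le> x}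
         \<le> exp (x * ln 2 - p * card D / 2)"
proof -
  let ?G = "bip_graph_pmf a b p"
  have half_power: "(1/2::real) ^ k = 2 powr (- real k)" for k :: nat
    by (simp add: powr_minus_divide powr_realpow power_one_over)
  have "{E. real (card (E \<inter> D)) \<le> x} = {E \<in> space ?G. (1/2) ^ card (E \<inter> D) \<ge> 2 powr (- x)}"
    by (auto simp: half_power)
  also have "measure_pmf.prob ?G \<dots> \<le> measure_pmf.expectation ?G (\<lambda>E. (1/2) ^ card (E \<inter> D)) / 2 powr (- x)"
    by (intro integral_Markov_inequality_measure measure_pmf.integrable_const_bound[where B = 1])
      (auto intro!: AE_I2 simp: power_le_one)
  also have "\<dots> = 2 powr x * (1 - p / 2) ^ card D"
    unfolding expectation_half_power_card_Int[OF assms] by (simp add: powr_minus_divide)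
  also have "\<dots> = exp (x * ln 2) * (1 - p / 2) ^ card D"
    by (simp add: powr_def)
  also have "\<dots> \<le> exp (x * ln 2) * exp (- p / 2) ^ card D"
    using p exp_ge_add_one_self[of "- p / 2"] by (intro mult_left_mono power_mono) simp_all
  also have "\<dots> = exp (x * ln 2 - p * card D / 2)"
    by (simp add: exp_of_nat_mult[symmetric] exp_add[symmetric] algebra_simps)
  finally show ?thesis .
qed

lemma prob_UN_UN_UN_le:
  fixes q :: "'k \<Rightarrow> real" and c :: real
  assumes "finite K" and "\<And>k. k \<in> K \<Longrightarrow> finite (X k)" and "\<And>k. k \<in> K \<Longrightarrow> finite (Y k)"
    and prob: "\<And>k x y. k \<in> K \<Longrightarrow> x \<in> X k \<Longrightarrow> y \<in> Y k \<Longrightarrow> measure_pmf.prob M (Ev x y) \<le> q k"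
    and count: "\<And>k. k \<in> K \<Longrightarrow> real (card (X k)) * real (card (Y k)) * q k \<le> c"
  shows "measure_pmf.prob M (\<Union>k\<in>K. \<Union>x\<in>X k. \<Union>y\<in>Y k. Ev x y) \<le> real (card K) * c"
proof -
  have "measure_pmf.prob M (\<Union>k\<in>K. \<Union>x\<in>X k. \<Union>y\<in>Y k. Ev x y)
      \<le> (\<Sum>k\<in>K. \<Sum>x\<in>X k. \<Sum>y\<in>Y k. measure_pmf.prob M (Ev x y))"
    using assms(1-3) by (intro order.trans[OF measure_pmf.finite_measure_subadditive_finite]
        sum_mono order.trans[OF measure_pmf.finite_measure_subadditive_finite]
        measure_pmf.finite_measure_subadditive_finite) auto
  also have "\<dots> \<le> (\<Sum>k\<in>K. \<Sum>x\<in>X k. \<Sum>y\<in>Y k. q k)"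
    using prob by (intro sum_mono) auto
  also have "\<dots> \<le> (\<Sum>k\<in>K. c)"
    using count by (intro sum_mono) (simp add: mult.assoc)
  finally show ?thesis
    by simp
qed

lemma card_subsets_card_less_le_power:
  assumes "finite X" and "2 \<le> card X"
  shows "card {U. U \<subseteq> X \<and> card U < k} \<le> card X ^ k"
proof (induction k)
  case (Suc k)
  have "{U. U \<subseteq> X \<and> card U < Suc k} = {U. U \<subseteq> X \<and> card U < k} \<union> {U. U \<subseteq> X \<and> card U = k}"
    by auto
  then have "card {U. U \<subseteq> X \<and> card U < Suc k}
      \<le> card {U. U \<subseteq> X \<and> card U < k} + card {U. U \<subseteq> X \<and> card U = k}"
    by (simp add: card_Un_le)
  also have "\<dots> \<le> card X ^ k + card X ^ k"
  proof -
    have "card X choose k \<le> card X ^ k"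
      by (cases "k \<le> card X") (auto simp: binomial_le_pow binomial_eq_0)
    then show ?thesis
      using Suc.IH by (simp add: n_subsets[OF \<open>finite X\<close>])
  qed
  also have "\<dots> = 2 * card X ^ k"
    by simp
  also have "\<dots> \<le> card X * card X ^ k"
    using assms(2) by (rule mult_right_mono) simp
  finally show ?case
    by simp
qed simp

locale dense_random_bipartite_graph =
  fixes r n :: nat and p :: real
  assumes r_ge_2: "2 \<le> r" and n_ge_2: "2 \<le> n" and p_nonneg: "0 \<le> p" and p_le_1: "p \<le> 1"
    and p_large: "64 * ln (real (r * n)) / real n \<le> p"
begin

abbreviation m :: nat where "m \<equiv> r * n"

abbreviation L :: real where "L \<equiv> ln (real m)"

lemma m_ge_4: "4 \<le> m"
  using mult_le_mono[OF r_ge_2 n_ge_2] by simp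

lemma n_le_m: "n \<le> m"
  using r_ge_2 by simp

lemma real_m_ge_4: "4 \<le> real m"
  using m_ge_4 by (metis of_nat_le_iff of_nat_numeral)

lemma L_pos: "0 < L"
  using real_m_ge_4 by (intro ln_gt_zero) linarith

lemma power_m_eq_exp: "real m ^ k = exp (real k * L)"
proof -
  have "exp L = real m"
    using real_m_ge_4 by (intro exp_ln) linarith
  then show ?thesis
    by (simp only: exp_of_nat_mult)
qed

lemma exp_minus_2L: "exp (- 2 * L) = 1 / real m ^ 2"
  unfolding power_m_eq_exp by (simp add: exp_minus field_simps)

lemma p_mult_ge_32_L:
  assumes "real n \<le> 2 * x"
  shows "32 * L \<le> p * x"
proof -
  have "64 * L \<le> p * n"
    using p_large n_ge_2 by (simp add: field_simps)
  also have "\<dots> \<le> p * (2 * x)"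
    using assms p_nonneg by (rule mult_left_mono)
  finally show ?thesis
    by simp
qed

lemma card_subsets_le_exp:
  assumes "finite X" and "card X \<le> m"
  shows "real (card {S. S \<subseteq> X \<and> card S = k}) \<le> exp (real k * L)"
proof -
  have "card {S. S \<subseteq> X \<and> card S = k} \<le> card X ^ k"
    by (cases "k \<le> card X") (auto simp: n_subsets[OF assms(1)] binomial_le_pow binomial_eq_0)
  also have "\<dots> \<le> m ^ k"
    using assms(2) by (rule power_mono) simp
  finally show ?thesis
    by (metis of_nat_le_iff of_nat_power power_m_eq_exp)
qed

lemma card_small_subsets_le_exp:
  assumes "finite X" and "2 \<le> card X" and "card X \<le> m"
  shows "real (card {U. U \<subseteq> X \<and> card U < k}) \<le> exp (real k * L)"
proof -
  have "card {U. U \<subseteq> X \<and> card U < k} \<le> card X ^ k"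
    using assms(1,2) by (rule card_subsets_card_less_le_power)
  also have "\<dots> \<le> m ^ k"
    using assms(3) by (rule power_mono) simp
  finally show ?thesis
    by (metis of_nat_le_iff of_nat_power power_m_eq_exp)
qed

lemma prob_sparse_block_le:
  assumes "S \<subseteq> {0..<n}" and "T \<subseteq> {0..<m}" and "0 \<le> k"
  shows "measure_pmf.prob (bip_graph_pmf n m p) {E. real (card (E \<inter> S \<times> T)) \<le> 16 * L * k}
         \<le> exp (12 * k * L - p * real (card S) * real (card T) / 2)"
proof -
  have "S \<times> T \<subseteq> {0..<n} \<times> {0..<m}"
    using assms(1,2) by blast
  then have "measure_pmf.prob (bip_graph_pmf n m p) {E. real (card (E \<inter> S \<times> T)) \<le> 16 * L * k}
      \<le> exp (16 * L * k * ln 2 - p * card (S \<times> T) / 2)"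
    using p_nonneg p_le_1 by (rule prob_few_edges_le)
  also have "\<dots> \<le> exp (12 * k * L - p * real (card S) * real (card T) / 2)"
  proof -
    have "16 * L * k * ln 2 \<le> 16 * L * k * (3 / 4)"
      using ln2_le_25_over_36 L_pos assms(3) by (intro mult_left_mono) auto
    then show ?thesis
      by (simp add: card_cartesian_product algebra_simps)
  qed
  finally show ?thesis .
qed

lemma prob_sparse_block_small_side_le:
  assumes "S \<subseteq> {0..<n}" and "T \<subseteq> {0..<m}" and "m \<le> 2 * card T"
  shows "measure_pmf.prob (bip_graph_pmf n m p) {E. real (card (E \<inter> S \<times> T)) \<le> 16 * L * card S}
         \<le> exp (- (16 * real r - 12) * real (card S) * L)"
proof -
  have "real r * real n \<le> 2 * card T"
    using of_nat_mono[OF assms(3)] by simp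
  then have "real n \<le> 2 * (card T / r)"
    using r_ge_2 by (simp add: field_simps mult.commute)
  then have "32 * L \<le> p * (card T / r)"
    by (rule p_mult_ge_32_L)
  then have "16 * real r * real (card S) * L \<le> p * real (card S) * real (card T) / 2"
    using r_ge_2 mult_left_mono[of "32 * L" "p * (card T / r)" "r * card S"] by (simp add: field_simps)
  then have "exp (12 * real (card S) * L - p * real (card S) * real (card T) / 2) \<le> exp (- (16 * real r - 12) * real (card S) * L)"
    by (simp add: algebra_simps)
  with prob_sparse_block_le[OF assms(1,2) of_nat_0_le_iff] show ?thesis
    by (rule order_trans)
qed

lemma prob_sparse_block_large_side_le:
  assumes "S \<subseteq> {0..<n}" and "T \<subseteq> {0..<m}" and "n \<le> 2 * card S"
  shows "measure_pmf.prob (bip_graph_pmf n m p) {E. real (card (E \<inter> S \<times> T)) \<le> 16 * L * card T}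
         \<le> exp (- 4 * real (card T) * L)"
proof -
  have "32 * L \<le> p * card S"
    using of_nat_mono[OF assms(3)] by (intro p_mult_ge_32_L) simp
  then have "16 * real (card T) * L \<le> p * real (card S) * real (card T) / 2"
    using mult_left_mono[of "32 * L" "p * card S" "card T"] by (simp add: field_simps)
  then have "exp (12 * real (card T) * L - p * real (card S) * real (card T) / 2) \<le> exp (- 4 * real (card T) * L)"
    by (simp add: algebra_simps)
  with prob_sparse_block_le[OF assms(1,2) of_nat_0_le_iff] show ?thesis
    by (rule order_trans)
qed

text \<open>A block S \<times> T is enumerated through S and U = B - T when |S| \<le> n/2, and through
  V = A - S and T otherwise: the complements are small, which keeps the union bound affordable.\<close>

definition sparse_small_S :: "(nat \<times> nat) set set" where
  "sparse_small_S =
     (\<Union>s\<in>{1..n div 2}. \<Union>S\<in>{S. S \<subseteq> {0..<n} \<and> card S = s}. \<Union>U\<in>{U. U \<subseteq> {0..<m} \<and> card U < r * s}.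
        {E. real (card (E \<inter> S \<times> ({0..<m} - U))) \<le> 16 * L * card S})"

definition sparse_large_S :: "(nat \<times> nat) set set" where
  "sparse_large_S =
     (\<Union>t\<in>{1..m}. \<Union>V\<in>{V. V \<subseteq> {0..<n} \<and> card V < t \<and> 2 * card V < n}. \<Union>T\<in>{T. T \<subseteq> {0..<m} \<and> card T = t}.
        {E. real (card (E \<inter> ({0..<n} - V) \<times> T)) \<le> 16 * L * card T})"

lemma sparse_block_in_sparse_small_S:
  assumes "S \<subseteq> {0..<n}" and "T \<subseteq> {0..<m}" and "S \<noteq> {}" and "m < card T + r * card S"
    and "2 * card S \<le> n" and sparse: "real (card (E \<inter> S \<times> T)) \<le> 16 * L * card S"
  shows "E \<in> sparse_small_S"
proof -
  define U where "U = {0..<m} - T"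
  have "finite S" "finite T"
    using assms(1,2) by (auto intro: finite_subset)
  then have "card S \<in> {1..n div 2}"
    using assms(3,5) by (auto simp: Suc_le_eq card_gt_0_iff)
  moreover have "m = card T + card U"
    using card_Int_Diff[of "{0..<m}" T] assms(2) unfolding U_def by (simp add: Int_absorb1)
  then have "card U < r * card S"
    using assms(4) by linarith
  moreover have "{0..<m} - U = T"
    using assms(2) unfolding U_def by blast
  ultimately show ?thesis
    unfolding sparse_small_S_def using assms(1) sparse U_def
    by (intro UN_I[of "card S"] UN_I[of S] UN_I[of U]) auto
qed

lemma sparse_block_in_sparse_large_S:
  assumes "S \<subseteq> {0..<n}" and "T \<subseteq> {0..<m}" and "m < card T + r * card S"
    and "n < 2 * card S" and sparse: "real (card (E \<inter> S \<times> T)) \<le> 16 * L * card T"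
  shows "E \<in> sparse_large_S"
proof -
  define V where "V = {0..<n} - S"
  have "card T \<le> m"
    using card_mono[OF _ assms(2)] by simp
  have card_V: "n = card S + card V"
    using card_Int_Diff[of "{0..<n}" S] assms(1) unfolding V_def by (simp add: Int_absorb1)
  then have "m = r * card S + r * card V"
    by (metis add_mult_distrib2)
  moreover have "card V \<le> r * card V"
    using r_ge_2 by simp
  ultimately have "card V < card T"
    using assms(3) by linarith
  moreover have "2 * card V < n"
    using assms(4) card_V by linarith
  moreover have "{0..<n} - V = S"
    using assms(1) unfolding V_def by blast
  moreover have "card T \<in> {1..m}"
    using \<open>card V < card T\<close> \<open>card T \<le> m\<close> by simp
  ultimately show ?thesis
    unfolding sparse_large_S_def using assms(2) sparse V_def
    by (intro UN_I[of "card T"] UN_I[of V] UN_I[of T]) auto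
qed

lemma no_robust_matching_in_sparse_events:
  assumes "E \<in> set_pmf (bip_graph_pmf n m p)" and "H \<subseteq> E"
    and "max_degree_le {0..<n} {0..<m} H (16 * L)"
    and "\<not> has_perfect_r_matching r {0..<n} {0..<m} (E - H)"
  shows "E \<in> sparse_small_S \<union> sparse_large_S"
proof -
  obtain S T where ST: "S \<subseteq> {0..<n}" "T \<subseteq> {0..<m}" "S \<noteq> {}" "m < card T + r * card S"
    and sparse: "real (card (E \<inter> S \<times> T)) \<le> 16 * L * card S" "real (card (E \<inter> S \<times> T)) \<le> 16 * L * card T"
    using sparse_block_if_no_perfect_r_matching[OF _ _ _ set_pmf_bip_graph_pmf[OF assms(1)] assms(2-4)]
    by auto
  show ?thesis
  proof (cases "2 * card S \<le> n")
    case True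
    then show ?thesis
      using sparse_block_in_sparse_small_S[OF ST True sparse(1)] by simp
  next
    case False
    then show ?thesis
      using sparse_block_in_sparse_large_S[OF ST(1,2,4) _ sparse(2)] by simp
  qed
qed

lemma small_S_block_count_le:
  assumes "1 \<le> s"
  shows "real (card {S. S \<subseteq> {0..<n} \<and> card S = s}) * real (card {U. U \<subseteq> {0..<m} \<and> card U < r * s})
           * exp (- (16 * real r - 12) * real s * L)
         \<le> exp (- 2 * L)"
proof -
  have "real (card {S. S \<subseteq> {0..<n} \<and> card S = s}) \<le> exp (real s * L)"
    using n_le_m by (intro card_subsets_le_exp) auto
  moreover have "real (card {U. U \<subseteq> {0..<m} \<and> card U < r * s}) \<le> exp (real (r * s) * L)"
    using m_ge_4 by (intro card_small_subsets_le_exp) auto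
  ultimately have "real (card {S. S \<subseteq> {0..<n} \<and> card S = s}) * real (card {U. U \<subseteq> {0..<m} \<and> card U < r * s})
        * exp (- (16 * real r - 12) * real s * L)
      \<le> exp (real s * L) * exp (real (r * s) * L) * exp (- (16 * real r - 12) * real s * L)"
    by (intro mult_right_mono mult_mono) auto
  also have "\<dots> = exp (- ((15 * real r - 13) * real s) * L)"
    by (simp add: exp_add[symmetric] algebra_simps)
  also have "\<dots> \<le> exp (- 2 * L)"
  proof -
    have "2 * 1 \<le> (15 * real r - 13) * real s"
      using r_ge_2 assms by (intro mult_mono) auto
    then show ?thesis
      using L_pos by simp
  qed
  finally show ?thesis .
qed

lemma large_S_block_count_le:
  assumes "1 \<le> t"
  shows "real (card {V. V \<subseteq> {0..<n} \<and> card V < t \<and> 2 * card V < n})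
           * real (card {T. T \<subseteq> {0..<m} \<and> card T = t}) * exp (- 4 * real t * L)
         \<le> exp (- 2 * L)"
proof -
  have "real (card {V. V \<subseteq> {0..<n} \<and> card V < t \<and> 2 * card V < n})
      \<le> real (card {V. V \<subseteq> {0..<n} \<and> card V < t})"
    by (intro of_nat_mono card_mono) auto
  also have "\<dots> \<le> exp (real t * L)"
    using n_ge_2 n_le_m by (intro card_small_subsets_le_exp) auto
  finally have "real (card {V. V \<subseteq> {0..<n} \<and> card V < t \<and> 2 * card V < n}) \<le> exp (real t * L)" .
  moreover have "real (card {T. T \<subseteq> {0..<m} \<and> card T = t}) \<le> exp (real t * L)"
    by (intro card_subsets_le_exp) auto
  ultimately have "real (card {V. V \<subseteq> {0..<n} \<and> card V < t \<and> 2 * card V < n})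
        * real (card {T. T \<subseteq> {0..<m} \<and> card T = t}) * exp (- 4 * real t * L)
      \<le> exp (real t * L) * exp (real t * L) * exp (- 4 * real t * L)"
    by (intro mult_right_mono mult_mono) auto
  also have "\<dots> = exp (- 2 * real t * L)"
    by (simp add: exp_add[symmetric] algebra_simps)
  also have "\<dots> \<le> exp (- 2 * L)"
    using assms L_pos by simp
  finally show ?thesis .
qed

lemma prob_sparse_small_S_le:
  "measure_pmf.prob (bip_graph_pmf n m p) sparse_small_S \<le> real n * exp (- 2 * L)"
proof -
  have "measure_pmf.prob (bip_graph_pmf n m p) sparse_small_S \<le> real (card {1..n div 2}) * exp (- 2 * L)"
    unfolding sparse_small_S_def
  proof (rule prob_UN_UN_UN_le[where q = "\<lambda>s. exp (- (16 * real r - 12) * real s * L)"])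
    fix s S U
    assume s: "s \<in> {1..n div 2}" and S: "S \<in> {S. S \<subseteq> {0..<n} \<and> card S = s}"
      and U: "U \<in> {U. U \<subseteq> {0..<m} \<and> card U < r * s}"
    have "m = card ({0..<m} - U) + card U"
      using card_Int_Diff[of "{0..<m}" U] U by (simp add: Int_absorb1)
    moreover have "2 * s \<le> n"
      using s less_eq_div_iff_mult_less_eq[where m = s and n = n and q = 2] by (simp add: mult.commute)
    then have "2 * (r * s) \<le> m"
      using mult_le_mono2[of "2 * s" n r] by (simp add: algebra_simps)
    moreover have "card U < r * s"
      using U by simp
    ultimately have "m \<le> 2 * card ({0..<m} - U)"
      by linarith
    then show "measure_pmf.prob (bip_graph_pmf n m p)
        {E. real (card (E \<inter> S \<times> ({0..<m} - U))) \<le> 16 * L * card S}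
        \<le> exp (- (16 * real r - 12) * real s * L)"
      using prob_sparse_block_small_side_le[of S "{0..<m} - U"] S by auto
  next
    fix s assume "s \<in> {1..n div 2}"
    then show "real (card {S. S \<subseteq> {0..<n} \<and> card S = s}) * real (card {U. U \<subseteq> {0..<m} \<and> card U < r * s})
        * exp (- (16 * real r - 12) * real s * L) \<le> exp (- 2 * L)"
      by (intro small_S_block_count_le) simp
  qed auto
  also have "\<dots> \<le> real n * exp (- 2 * L)"
    by (intro mult_right_mono) auto
  finally show ?thesis .
qed

lemma prob_sparse_large_S_le:
  "measure_pmf.prob (bip_graph_pmf n m p) sparse_large_S \<le> real m * exp (- 2 * L)"
proof -
  have "measure_pmf.prob (bip_graph_pmf n m p) sparse_large_S \<le> real (card {1..m}) * exp (- 2 * L)"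
    unfolding sparse_large_S_def
  proof (rule prob_UN_UN_UN_le[where q = "\<lambda>t. exp (- 4 * real t * L)"])
    fix t V T
    assume V: "V \<in> {V. V \<subseteq> {0..<n} \<and> card V < t \<and> 2 * card V < n}"
      and T: "T \<in> {T. T \<subseteq> {0..<m} \<and> card T = t}"
    have "n = card ({0..<n} - V) + card V"
      using card_Int_Diff[of "{0..<n}" V] V by (simp add: Int_absorb1)
    moreover have "2 * card V < n"
      using V by simp
    ultimately have "n \<le> 2 * card ({0..<n} - V)"
      by linarith
    then show "measure_pmf.prob (bip_graph_pmf n m p)
        {E. real (card (E \<inter> ({0..<n} - V) \<times> T)) \<le> 16 * L * card T}
        \<le> exp (- 4 * real t * L)"
      using prob_sparse_block_large_side_le[of "{0..<n} - V" T] T by auto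
  next
    fix t assume "t \<in> {1..m}"
    then show "real (card {V. V \<subseteq> {0..<n} \<and> card V < t \<and> 2 * card V < n})
        * real (card {T. T \<subseteq> {0..<m} \<and> card T = t}) * exp (- 4 * real t * L) \<le> exp (- 2 * L)"
      by (intro large_S_block_count_le) simp
  qed auto
  then show ?thesis
    by simp
qed

lemma prob_robust_matching_ge:
  "1 - 2 / real m \<le> measure_pmf.prob (bip_graph_pmf n m p)
     {E. \<forall>H. H \<subseteq> E \<and> max_degree_le {0..<n} {0..<m} H (16 * L)
            \<longrightarrow> has_perfect_r_matching r {0..<n} {0..<m} (E - H)}"
  (is "_ \<le> measure_pmf.prob ?G ?Good")
proof -
  have "measure_pmf.prob ?G (UNIV - ?Good) = measure_pmf.prob ?G ((UNIV - ?Good) \<inter> set_pmf ?G)"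
    by (simp add: measure_Int_set_pmf)
  also have "\<dots> \<le> measure_pmf.prob ?G (sparse_small_S \<union> sparse_large_S)"
    using no_robust_matching_in_sparse_events by (intro measure_pmf.finite_measure_mono) auto
  also have "\<dots> \<le> measure_pmf.prob ?G sparse_small_S + measure_pmf.prob ?G sparse_large_S"
    by (rule measure_Un_le) auto
  also have "\<dots> \<le> (real n + real m) * exp (- 2 * L)"
    using prob_sparse_small_S_le prob_sparse_large_S_le by (simp add: algebra_simps)
  also have "\<dots> \<le> 2 * real m * exp (- 2 * L)"
    using of_nat_mono[OF n_le_m] by (intro mult_right_mono) (simp_all del: of_nat_mult)
  also have "\<dots> = 2 / real m"
    using real_m_ge_4 unfolding exp_minus_2L by (simp add: power2_eq_square del: of_nat_mult)
  finally show ?thesis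
    using measure_pmf.prob_compl[of ?Good ?G] by simp
qed

end

theorem lemma4:
  fixes r :: nat and p :: "nat \<Rightarrow> real"
  assumes "r \<ge> 2"
    and "\<And>n. 0 \<le> p n \<and> p n \<le> 1"
    and "eventually (\<lambda>n. p n \<ge> 64 * ln (real (r * n)) / real n) sequentially"
  shows "(\<lambda>n. measure_pmf.prob (bip_graph_pmf n (r * n) (p n))
            {E. \<forall>H. H \<subseteq> E \<and> max_degree_le {0..<n} {0..<r * n} H (16 * ln (real (r * n)))
                   \<longrightarrow> has_perfect_r_matching r {0..<n} {0..<r * n} (E - H)})
         \<longlonglongrightarrow> 1"
    (is "?P \<longlonglongrightarrow> 1")
proof (rule tendsto_sandwich)
  show "eventually (\<lambda>n. 1 - 2 / real (r * n) \<le> ?P n) sequentially"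
    using assms(3) eventually_ge_at_top[of 2]
  proof eventually_elim
    case (elim n)
    interpret dense_random_bipartite_graph r n "p n"
      using assms(1,2) elim by unfold_locales auto
    show ?case
      by (rule prob_robust_matching_ge)
  qed
  show "eventually (\<lambda>n. ?P n \<le> 1) sequentially"
    by (simp add: measure_pmf.prob_le_1)
  have "(\<lambda>n. 2 / real r / real n) \<longlonglongrightarrow> 0"
    by (rule lim_const_over_n)
  then have "(\<lambda>n. 2 / real (r * n)) \<longlonglongrightarrow> 0"
    by simp
  then show "(\<lambda>n. 1 - 2 / real (r * n)) \<longlonglongrightarrow> 1"
    using tendsto_diff[OF tendsto_const] by fastforce
qed simp

end
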